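(* Let $\{a_i,b_i\}$, $i\in\mathbb N_+$, be pairwise distinct two-element subsets of $U$, and let $\mathcal D_1$ be the edge-independent unbounded probabilistic graph in which $E(a_i,b_i)$ and $E(b_i,a_i)$ have marginal probability $p_{a_i,b_i}=p_{b_i,a_i}=1/i^4$ for each $i\in\mathbb N_+$ and all other facts have marginal probability $0$. Then $\mathcal D_1\in\mathsf{CQ}(\mathsf{TI})$.
   Context: Fix a countably infinite universe $U$ equipped with a linear order $<$. Facts are $R(u_1,\dots,u_{\mathrm{ar}(R)})$ with $R$ from a finite schema and $u_i\in U$; instances are finite sets of facts; $\mathrm{adom}(D)$ is the set of elements of $U$ occurring in $D$. A probabilistic database (PDB) is a discrete probability space $(\mathbb D,P)$ with $\mathbb D$ a nonempty countable set of instances; its possible worlds are the instances of positive probability. A graph database is an instance over a single binary relation $E$; it is simple if it has no fact $E(a,a)$ and undirected if $E(a,b)\in D$ implies $E(b,a)\in D$. An edge-independent unbounded probabilistic graph is a PDB $\mathcal D$ such that: every possible world is a simple undirected graph database; for every sequence of pairwise distinct two-element subsets $\{a_1,b_1\},\dots,\{a_k,b_k\}$ of $U$, the events $E(a_i,b_i)\in D$ are independent; and for every $n$ there is a possible world with more than $n$ facts. Such a PDB is determined by the marginals $p_{a,b}=\Pr(E(a,b)\in D)$. A PDB $\mathcal I$ is tuple-independent ($\mathsf{TI}$) if for all pairwise distinct facts $f_1,\dots,f_k$, $\Pr(f_1\in I,\dots,f_k\in I)=\prod_i\Pr(f_i\in I)$. A conjunctive query is a formula built from relational atoms $R(\bar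 u)$ ($\bar u$ variables or constants) and equality atoms using only $\exists,\wedge$, evaluated under active domain semantics; a CQ-view consists of one CQ $\Phi_R(x_1,\dots,x_{\mathrm{ar}(R)})$ per output relation $R$, mapping $D$ to the instance of all $R(\bar a)$ with $\bar a$ over $\mathrm{adom}(D)\cup\mathrm{adom}(\Phi_R)$ and $D\models\Phi_R[\bar a]$. The image of a PDB under a view is the push-forward distribution; $\mathsf{CQ}(\mathsf{TI})$ is the class of images of TI-PDBs under CQ-views. *)

theory Defs
  imports "HOL-Probability.Probability" "HOL-Library.Countable" "HOL-Library.Infinite_Typeclass"
begin

text \<open>A fact R(u_1,...,u_k) is represented as a pair (R, [u_1,...,u_k]) with relation
  names drawn from nat.\<close>

type_synonym 'u fact = "nat \<times> 'u list"
type_synonym 'u inst = "'u fact set"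

definition is_instance :: "nat set \<Rightarrow> (nat \<Rightarrow> nat) \<Rightarrow> 'u inst \<Rightarrow> bool" where
  "is_instance S ar I \<longleftrightarrow> finite I \<and> (\<forall>(R, us) \<in> I. R \<in> S \<and> length us = ar R)"

definition adom :: "'u inst \<Rightarrow> 'u set" where
  "adom I = (\<Union>f\<in>I. set (snd f))"

definition is_PDB :: "nat set \<Rightarrow> (nat \<Rightarrow> nat) \<Rightarrow> 'u inst pmf \<Rightarrow> bool" where
  "is_PDB S ar P \<longleftrightarrow> finite S \<and> (\<forall>I \<in> set_pmf P. is_instance S ar I)"

definition tuple_independent :: "'u inst pmf \<Rightarrow> bool" where
  "tuple_independent P \<longleftrightarrow>
     (\<forall>F. finite F \<longrightarrow>
        measure_pmf.prob P {I. F \<subseteq> I} = (\<Prod>f\<in>F. measure_pmf.prob P {I. f \<in> I}))"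

datatype 'u cq_term = CVar nat | CConst 'u

datatype 'u cq =
    RelAtom nat "'u cq_term list"
  | EqAtom "'u cq_term" "'u cq_term"
  | Conj "'u cq" "'u cq"
  | Exists nat "'u cq"

fun term_vars :: "'u cq_term \<Rightarrow> nat set" where
  "term_vars (CVar x) = {x}"
| "term_vars (CConst c) = {}"

fun term_consts :: "'u cq_term \<Rightarrow> 'u set" where
  "term_consts (CVar x) = {}"
| "term_consts (CConst c) = {c}"

fun term_eval :: "(nat \<Rightarrow> 'u) \<Rightarrow> 'u cq_term \<Rightarrow> 'u" where
  "term_eval \<nu> (CVar x) = \<nu> x"
| "term_eval \<nu> (CConst c) = c"

fun cq_fv :: "'u cq \<Rightarrow> nat set" where
  "cq_fv (RelAtom R ts) = (\<Union>t\<in>set ts. term_vars t)"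
| "cq_fv (EqAtom s t) = term_vars s \<union> term_vars t"
| "cq_fv (Conj \<phi> \<psi>) = cq_fv \<phi> \<union> cq_fv \<psi>"
| "cq_fv (Exists x \<phi>) = cq_fv \<phi> - {x}"

fun cq_consts :: "'u cq \<Rightarrow> 'u set" where
  "cq_consts (RelAtom R ts) = (\<Union>t\<in>set ts. term_consts t)"
| "cq_consts (EqAtom s t) = term_consts s \<union> term_consts t"
| "cq_consts (Conj \<phi> \<psi>) = cq_consts \<phi> \<union> cq_consts \<psi>"
| "cq_consts (Exists x \<phi>) = cq_consts \<phi>"

fun cq_holds :: "'u inst \<Rightarrow> 'u set \<Rightarrow> (nat \<Rightarrow> 'u) \<Rightarrow> 'u cq \<Rightarrow> bool" where
  "cq_holds D Dom \<nu> (RelAtom R ts) \<longleftrightarrow> (R, map (term_eval \<nu>) ts) \<in> D"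
| "cq_holds D Dom \<nu> (EqAtom s t) \<longleftrightarrow> term_eval \<nu> s = term_eval \<nu> t"
| "cq_holds D Dom \<nu> (Conj \<phi> \<psi>) \<longleftrightarrow> cq_holds D Dom \<nu> \<phi> \<and> cq_holds D Dom \<nu> \<psi>"
| "cq_holds D Dom \<nu> (Exists x \<phi>) \<longleftrightarrow> (\<exists>a\<in>Dom. cq_holds D Dom (\<nu>(x := a)) \<phi>)"

text \<open>A CQ Phi(x_1,...,x_k): a formula together with the distinct list of its
  free (output) variables.\<close>
definition wf_cq :: "'u cq \<Rightarrow> nat list \<Rightarrow> bool" where
  "wf_cq \<phi> xs \<longleftrightarrow> distinct xs \<and> cq_fv \<phi> \<subseteq> set xs"

definition cq_answers :: "'u cq \<Rightarrow> nat list \<Rightarrow> 'u inst \<Rightarrow> 'u list set" where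
  "cq_answers \<phi> xs D =
     {us. length us = length xs \<and> set us \<subseteq> adom D \<union> cq_consts \<phi> \<and>
          cq_holds D (adom D \<union> cq_consts \<phi>)
            (\<lambda>x. case map_of (zip xs us) x of Some u \<Rightarrow> u | None \<Rightarrow> undefined) \<phi>}"

text \<open>A graph database (instance over the single binary relation E) is represented by the set
  of pairs (a,b) with E(a,b) in the instance.\<close>

definition graph_view :: "'u cq \<Rightarrow> nat list \<Rightarrow> 'u inst \<Rightarrow> ('u \<times> 'u) set" where
  "graph_view \<phi> xs D = {(u, v). [u, v] \<in> cq_answers \<phi> xs D}"

definition in_CQ_TI_graph :: "('u \<times> 'u) set pmf \<Rightarrow> bool" where
  "in_CQ_TI_graph Q \<longleftrightarrow>
     (\<exists>S ar (P :: 'u inst pmf) \<phi> xs.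
        is_PDB S ar P \<and> tuple_independent P \<and> wf_cq \<phi> xs \<and> length xs = 2 \<and>
        map_pmf (graph_view \<phi> xs) P = Q)"

definition edge_indep_unbounded_graph :: "('u \<times> 'u) set pmf \<Rightarrow> bool" where
  "edge_indep_unbounded_graph Q \<longleftrightarrow>
     (\<forall>D\<in>set_pmf Q. finite D \<and> (\<forall>a. (a, a) \<notin> D) \<and> (\<forall>a b. (a, b) \<in> D \<longrightarrow> (b, a) \<in> D)) \<and>
     (\<forall>F. finite F \<longrightarrow> (\<forall>(a, b)\<in>F. a \<noteq> b) \<longrightarrow> inj_on (\<lambda>(a, b). {a, b}) F \<longrightarrow>
        measure_pmf.prob Q {D. F \<subseteq> D} = (\<Prod>e\<in>F. measure_pmf.prob Q {D. e \<in> D})) \<and>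
     (\<forall>n::nat. \<exists>D\<in>set_pmf Q. card D > n)"

end

theory Submission
  imports Defs
begin

(* Take a tuple-independent database over one binary
   relation R in which R(a_i, b_i) and R(b_i, a_i) are present independently with probability
   1/i^2 each; it exists because these probabilities are summable, so by Borel-Cantelli an
   infinite product of Bernoulli variables has almost surely finitely many successes. The
   conjunctive view E(x, y) := R(x, y) AND R(y, x) then contains the edge {a_i, b_i} with
   probability 1/i^2 * 1/i^2 = 1/i^4, independently over i. A distribution of finite subsets of
   a countable set is determined by the probabilities that a given finite set is contained, and
   for both the view and D1 these are products of the same arc marginals. *)

section \<open>Random sets with independent membership\<close>

definition indep_random_set :: "'a set pmf \<Rightarrow> ('a \<Rightarrow> real) \<Rightarrow> bool" where
  "indep_random_set P r \<longleftrightarrow>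
     (\<forall>F. finite F \<longrightarrow> measure_pmf.prob P {S. F \<subseteq> S} = (\<Prod>x\<in>F. r x))"

lemma indep_random_set_prob_mem:
  assumes "indep_random_set P r"
  shows "measure_pmf.prob P {S. x \<in> S} = r x"
  using assms[unfolded indep_random_set_def, rule_format, of "{x}"] by (simp cong: Collect_cong)

lemma indep_random_set_imp_tuple_independent:
  assumes "indep_random_set P r"
  shows "tuple_independent P"
  using assms unfolding tuple_independent_def indep_random_set_prob_mem[OF assms]
  by (simp add: indep_random_set_def)

lemma indep_random_set_map_image:
  fixes g :: "'a \<Rightarrow> 'b"
  assumes P: "indep_random_set P r" and "inj g"
    and q_image: "\<And>x. q (g x) = r x" and q_outside: "\<And>y. y \<notin> range g \<Longrightarrow> q y = 0"
  shows "indep_random_set (map_pmf (image g) P) q"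
  unfolding indep_random_set_def
proof (intro allI impI)
  fix F :: "'b set" assume "finite F"
  show "measure_pmf.prob (map_pmf (image g) P) {Y. F \<subseteq> Y} = (\<Prod>y\<in>F. q y)"
  proof (cases "F \<subseteq> range g")
    case True
    have "F \<subseteq> g ` S \<longleftrightarrow> g -` F \<subseteq> S" for S
    proof
      assume "g -` F \<subseteq> S"
      then show "F \<subseteq> g ` S"
        using True by fastforce
    qed (use \<open>inj g\<close> in \<open>auto dest: inj_image_mem_iff[THEN iffD1]\<close>)
    then have "image g -` {Y. F \<subseteq> Y} = {S. g -` F \<subseteq> S}"
      by auto
    then have "measure_pmf.prob (map_pmf (image g) P) {Y. F \<subseteq> Y} = measure_pmf.prob P {S. g -` F \<subseteq> S}"
      by simp
    also have "\<dots> = (\<Prod>x\<in>g -` F. q (g x))"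
      using P \<open>finite F\<close> \<open>inj g\<close> by (simp add: indep_random_set_def finite_vimageI q_image)
    also have "\<dots> = (\<Prod>y\<in>g ` (g -` F). q y)"
      using \<open>inj g\<close> by (subst prod.reindex) (auto intro: inj_on_subset)
    also have "g ` (g -` F) = F"
      using True by auto
    finally show ?thesis .
  next
    case False
    then obtain y where y: "y \<in> F" "y \<notin> range g" by auto
    then have "image g -` {Y. F \<subseteq> Y} = {}" by auto
    moreover have "(\<Prod>y\<in>F. q y) = 0"
      using \<open>finite F\<close> y q_outside by (auto simp: prod_zero_iff)
    ultimately show ?thesis by simp
  qed
qed

lemma prob_superset_disjoint_eq:
  fixes P Q :: "'a set pmf"
  assumes eq: "\<And>F. finite F \<Longrightarrow> measure_pmf.prob P {S. F \<subseteq> S} = measure_pmf.prob Q {S. F \<subseteq> S}"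
    and "finite B" and "finite A"
  shows "measure_pmf.prob P {S. A \<subseteq> S \<and> B \<inter> S = {}} = measure_pmf.prob Q {S. A \<subseteq> S \<and> B \<inter> S = {}}"
  using \<open>finite B\<close> \<open>finite A\<close>
proof (induction B arbitrary: A rule: finite_induct)
  case empty
  then show ?case using eq by simp
next
  case (insert x B)
  show ?case
  proof (cases "x \<in> A")
    case True
    then have "{S. A \<subseteq> S \<and> insert x B \<inter> S = {}} = {}" by auto
    then show ?thesis by (simp only: measure_empty)
  next
    case False
    let ?E = "{S. A \<subseteq> S \<and> B \<inter> S = {}}" and ?E' = "{S. insert x A \<subseteq> S \<and> B \<inter> S = {}}"
    have "{S. A \<subseteq> S \<and> insert x B \<inter> S = {}} = ?E - ?E'" and "?E' \<subseteq> ?E"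
      by auto
    then have "measure_pmf.prob R {S. A \<subseteq> S \<and> insert x B \<inter> S = {}} =
        measure_pmf.prob R ?E - measure_pmf.prob R ?E'" for R
      by (simp add: measure_pmf.finite_measure_Diff)
    then show ?thesis
      using insert.IH[of A] insert.IH[of "insert x A"] insert.prems by simp
  qed
qed

lemma random_set_pmf_eqI:
  fixes P Q :: "'a::countable set pmf"
  assumes eq: "\<And>F. finite F \<Longrightarrow> measure_pmf.prob P {S. F \<subseteq> S} = measure_pmf.prob Q {S. F \<subseteq> S}"
  shows "P = Q"
proof (rule pmf_eqI)
  fix S\<^sub>0 :: "'a set"
  define K where "K n = {x::'a. to_nat x < n}" for n
  have "finite (K n)" for n
    using finite_vimageI[of "{..<n}" to_nat] by (simp add: K_def vimage_def)
  define E where "E n = {S. S\<^sub>0 \<inter> K n \<subseteq> S \<and> (K n - S\<^sub>0) \<inter> S = {}}" for n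
  have "decseq E"
    unfolding decseq_def E_def K_def by (auto 0 3 dest: order.strict_trans2)
  have "(\<Inter>n. E n) = {S\<^sub>0}"
  proof (intro equalityI subsetI)
    fix S assume "S \<in> (\<Inter>n. E n)"
    then have S: "S\<^sub>0 \<inter> K n \<subseteq> S \<and> (K n - S\<^sub>0) \<inter> S = {}" for n
      by (auto simp: E_def)
    have "x \<in> S \<longleftrightarrow> x \<in> S\<^sub>0" for x
      using S[of "Suc (to_nat x)"] by (auto simp: K_def)
    then show "S \<in> {S\<^sub>0}" by auto
  qed (auto simp: E_def)
  moreover have "(\<lambda>n. measure_pmf.prob R (E n)) \<longlonglongrightarrow> measure_pmf.prob R (\<Inter>n. E n)" for R :: "'a set pmf"
    using \<open>decseq E\<close> by (intro measure_pmf.finite_Lim_measure_decseq) auto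
  moreover have "(\<lambda>n. measure_pmf.prob P (E n)) = (\<lambda>n. measure_pmf.prob Q (E n))"
    unfolding E_def using prob_superset_disjoint_eq[OF eq] \<open>\<And>n. finite (K n)\<close> by simp
  ultimately have "measure_pmf.prob P {S\<^sub>0} = measure_pmf.prob Q {S\<^sub>0}"
    using LIMSEQ_unique by metis
  then show "pmf P S\<^sub>0 = pmf Q S\<^sub>0"
    by (simp add: measure_pmf_single)
qed

section \<open>Existence of independent random finite sets\<close>

lemma (in prob_space) obtain_pmf_countably_valued:
  assumes "countable A" and AE_A: "AE \<omega> in M. X \<omega> \<in> A"
    and fibers: "\<And>a. a \<in> A \<Longrightarrow> X -` {a} \<inter> space M \<in> events"
  obtains P where "\<And>B. measure_pmf.prob P B = prob {\<omega> \<in> space M. X \<omega> \<in> A \<inter> B}"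
proof -
  define f where "f a = (if a \<in> A then prob (X -` {a} \<inter> space M) else 0)" for a
  have preimage_eq: "{\<omega> \<in> space M. X \<omega> \<in> A \<inter> B} = (\<Union>a\<in>A \<inter> B. X -` {a} \<inter> space M)" for B
    by auto
  have preimage_event: "{\<omega> \<in> space M. X \<omega> \<in> A \<inter> B} \<in> events" for B
    unfolding preimage_eq using \<open>countable A\<close> fibers by (intro sets.countable_UN'') auto
  have emeasure_preimage: "emeasure M {\<omega> \<in> space M. X \<omega> \<in> A \<inter> B} =
      (\<integral>\<^sup>+a. ennreal (f a) * indicator B a \<partial>count_space UNIV)" for B
  proof -
    have "emeasure M {\<omega> \<in> space M. X \<omega> \<in> A \<inter> B} =
        (\<integral>\<^sup>+a. emeasure M (X -` {a} \<inter> space M) \<partial>count_space (A \<inter> B))"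
      unfolding preimage_eq using \<open>countable A\<close> fibers
      by (intro emeasure_UN_countable) (auto simp: disjoint_family_on_def)
    also have "\<dots> = (\<integral>\<^sup>+a. emeasure M (X -` {a} \<inter> space M) * indicator (A \<inter> B) a \<partial>count_space UNIV)"
      by (rule nn_integral_count_space_indicator) simp
    also have "\<dots> = (\<integral>\<^sup>+a. ennreal (f a) * indicator B a \<partial>count_space UNIV)"
      by (intro nn_integral_cong) (auto simp: f_def emeasure_eq_measure indicator_def)
    finally show ?thesis .
  qed
  have "(\<integral>\<^sup>+a. ennreal (f a) \<partial>count_space UNIV) = 1"
    using emeasure_preimage[of UNIV] emeasure_eq_1_AE[OF preimage_event[of UNIV]] AE_A by simp
  then have pmf_P: "pmf (embed_pmf f) a = f a" for a
    by (intro pmf_embed_pmf) (auto simp: f_def)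
  show ?thesis
  proof
    fix B
    have "emeasure (embed_pmf f) B = (\<integral>\<^sup>+a. ennreal (f a) * indicator B a \<partial>count_space UNIV)"
      by (simp add: nn_integral_measure_pmf pmf_P flip: nn_integral_indicator)
    also have "\<dots> = emeasure M {\<omega> \<in> space M. X \<omega> \<in> A \<inter> B}"
      by (rule emeasure_preimage[symmetric])
    finally show "measure_pmf.prob (embed_pmf f) B = prob {\<omega> \<in> space M. X \<omega> \<in> A \<inter> B}"
      by (simp add: measure_pmf.emeasure_eq_measure emeasure_eq_measure)
  qed
qed

definition bernoulli_product :: "(nat \<Rightarrow> real) \<Rightarrow> (nat \<Rightarrow> bool) measure" where
  "bernoulli_product r = (\<Pi>\<^sub>M n\<in>UNIV. measure_pmf (bernoulli_pmf (r n)))"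

lemma product_prob_space_bernoulli: "product_prob_space (\<lambda>n. measure_pmf (bernoulli_pmf (r n)))"
  unfolding product_prob_space_def product_sigma_finite_def product_prob_space_axioms_def
  by (auto intro: measure_pmf.prob_space_axioms measure_pmf.sigma_finite_measure_axioms)

lemma prob_space_bernoulli_product: "prob_space (bernoulli_product r)"
  unfolding bernoulli_product_def by (intro prob_space_PiM measure_pmf.prob_space_axioms)

lemma space_bernoulli_product [simp]: "space (bernoulli_product r) = UNIV"
  by (simp add: bernoulli_product_def space_PiM)

lemma sets_bernoulli_product_coordinate: "{\<omega>. Q (\<omega> n)} \<in> sets (bernoulli_product r)"
  using sets_Collect_single'[of n UNIV "\<lambda>n. measure_pmf (bernoulli_pmf (r n))" Q]
  by (simp add: bernoulli_product_def space_PiM)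

lemma sets_bernoulli_product_true_set: "{\<omega>. {n. \<omega> n} = S} \<in> sets (bernoulli_product r)"
proof -
  have "{\<omega>. {n. \<omega> n} = S} = (\<Inter>n. {\<omega>. \<omega> n = (n \<in> S)})"
    by auto
  then show ?thesis
    using sets_bernoulli_product_coordinate by auto
qed

lemma sets_bernoulli_product_finite_true_set:
  "{\<omega>. {n. \<omega> n} \<in> Collect finite \<inter> B} \<in> sets (bernoulli_product r)"
proof -
  have "{\<omega>. {n. \<omega> n} \<in> Collect finite \<inter> B} = (\<Union>S\<in>Collect finite \<inter> B. {\<omega>. {n. \<omega> n} = S})"
    by auto
  then show ?thesis
    by (simp only:) (intro sets.countable_UN'' countable_Int1 countable_Collect_finite
        sets_bernoulli_product_true_set)
qed

lemma sets_bernoulli_product_all_true: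
  "finite F \<Longrightarrow> {\<omega>. \<forall>n\<in>F. \<omega> n} \<in> sets (bernoulli_product r)"
  using sets.sets_Collect_finite_All[of F "bernoulli_product r" "\<lambda>n \<omega>. \<omega> n"]
    sets_bernoulli_product_coordinate[of "\<lambda>x. x"] by simp

lemma measure_bernoulli_product_all_true:
  assumes "\<And>n. 0 \<le> r n" "\<And>n. r n \<le> 1" and "finite F"
  shows "measure (bernoulli_product r) {\<omega>. \<forall>n\<in>F. \<omega> n} = (\<Prod>n\<in>F. r n)"
proof -
  interpret product_prob_space "\<lambda>n. measure_pmf (bernoulli_pmf (r n))" UNIV
    by (rule product_prob_space_bernoulli)
  have "emeasure (bernoulli_product r) {\<omega>. \<forall>n\<in>F. \<omega> n \<in> {True}} =
      (\<Prod>n\<in>F. emeasure (bernoulli_pmf (r n)) {True})"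
    using emeasure_PiM_Collect[of F "\<lambda>_. {True}"] \<open>finite F\<close>
    by (simp add: bernoulli_product_def space_PiM)
  also have "\<dots> = ennreal (\<Prod>n\<in>F. r n)"
    using assms by (simp add: emeasure_pmf_single prod_ennreal)
  finally show ?thesis
    using assms by (simp add: measure_def prod_nonneg)
qed

lemma AE_bernoulli_product_finite:
  assumes "\<And>n. 0 \<le> r n" "\<And>n. r n \<le> 1" and "summable r"
  shows "AE \<omega> in bernoulli_product r. finite {n. \<omega> n}"
proof -
  interpret prob_space "bernoulli_product r"
    by (rule prob_space_bernoulli_product)
  have "measure (bernoulli_product r) {\<omega>. \<omega> n} = r n" for n
    using measure_bernoulli_product_all_true[of r "{n}"] assms by simp
  then have "AE \<omega> in bernoulli_product r. \<forall>\<^sub>F n in sequentially. \<omega> \<in> space (bernoulli_product r) - {\<omega>. \<omega> n}"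
    using \<open>summable r\<close> sets_bernoulli_product_coordinate[of "\<lambda>x. x"]
    by (intro borel_cantelli_AE1) (auto simp: emeasure_eq_measure)
  then show ?thesis
  proof (rule AE_mp, intro AE_I2 impI)
    fix \<omega> assume "\<forall>\<^sub>F n in sequentially. \<omega> \<in> space (bernoulli_product r) - {\<omega>. \<omega> n}"
    then obtain N where "\<forall>n\<ge>N. \<not> \<omega> n"
      by (auto simp: eventually_sequentially)
    then have "{n. \<omega> n} \<subseteq> {..<N}"
      using not_le by blast
    then show "finite {n. \<omega> n}"
      using finite_subset by blast
  qed
qed

lemma obtain_indep_random_set:
  fixes r :: "nat \<Rightarrow> real"
  assumes r: "\<And>n. 0 \<le> r n" "\<And>n. r n \<le> 1" and "summable r"
  obtains P :: "nat set pmf" where "\<And>S. S \<in> set_pmf P \<Longrightarrow> finite S" and "indep_random_set P r"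
proof -
  let ?M = "bernoulli_product r"
  interpret prob_space ?M
    by (rule prob_space_bernoulli_product)
  have AE_finite: "AE \<omega> in ?M. finite {n. \<omega> n}"
    using AE_bernoulli_product_finite[OF r \<open>summable r\<close>] .
  obtain P where P: "\<And>B. measure_pmf.prob P B = prob {\<omega>. {n. \<omega> n} \<in> Collect finite \<inter> B}"
    using obtain_pmf_countably_valued[of "Collect finite" "\<lambda>\<omega>. {n. \<omega> n}"] AE_finite
      countable_Collect_finite sets_bernoulli_product_true_set by (auto simp: vimage_def)
  show ?thesis
  proof
    fix S assume "S \<in> set_pmf P"
    then have "measure_pmf.prob P {S} \<noteq> 0"
      by (simp add: measure_pmf_single set_pmf_iff)
    then show "finite S"
      using P[of "{S}"] by (cases "finite S") auto
  next
    show "indep_random_set P r"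
      unfolding indep_random_set_def
    proof (intro allI impI)
      fix F :: "nat set" assume "finite F"
      have "measure_pmf.prob P {S. F \<subseteq> S} = prob {\<omega>. {n. \<omega> n} \<in> Collect finite \<inter> {S. F \<subseteq> S}}"
        by (rule P)
      also have "\<dots> = prob {\<omega>. \<forall>n\<in>F. \<omega> n}"
      proof (rule measure_eq_AE)
        show "{\<omega>. {n. \<omega> n} \<in> Collect finite \<inter> {S. F \<subseteq> S}} \<in> events"
          by (rule sets_bernoulli_product_finite_true_set)
        show "{\<omega>. \<forall>n\<in>F. \<omega> n} \<in> events"
          using \<open>finite F\<close> by (rule sets_bernoulli_product_all_true)
      qed (use AE_finite in \<open>auto elim: AE_mp\<close>)
      also have "\<dots> = (\<Prod>n\<in>F. r n)"
        using measure_bernoulli_product_all_true[OF r \<open>finite F\<close>] .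
      finally show "measure_pmf.prob P {S. F \<subseteq> S} = (\<Prod>n\<in>F. r n)" .
    qed
  qed
qed

section \<open>The symmetric-core view\<close>

definition sym_core :: "('u \<times> 'u) set \<Rightarrow> ('u \<times> 'u) set" where
  "sym_core G = G \<inter> G\<inverse>"

lemma subset_sym_core_iff: "F \<subseteq> sym_core G \<longleftrightarrow> F \<union> F\<inverse> \<subseteq> G"
  by (auto simp: sym_core_def)

definition sym_query :: "'u cq" where
  "sym_query = Conj (RelAtom 0 [CVar 0, CVar 1]) (RelAtom 0 [CVar 1, CVar 0])"

definition edge_fact :: "'u \<times> 'u \<Rightarrow> 'u fact" where
  "edge_fact p = (0, [fst p, snd p])"

lemma edge_fact_mem_image_iff [simp]: "(0, [u, v]) \<in> edge_fact ` G \<longleftrightarrow> (u, v) \<in> G"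
  by (force simp: edge_fact_def)

lemma graph_view_sym_query: "graph_view sym_query [0, 1] (edge_fact ` G) = sym_core G"
proof -
  have "u \<in> adom (edge_fact ` G) \<and> v \<in> adom (edge_fact ` G)" if "(u, v) \<in> G" for u v
    using that unfolding adom_def edge_fact_def by force
  then show ?thesis
    unfolding graph_view_def cq_answers_def sym_query_def sym_core_def by auto
qed

lemma in_CQ_TI_graph_sym_core:
  assumes "\<And>G. G \<in> set_pmf X \<Longrightarrow> finite G" and "indep_random_set X q"
  shows "in_CQ_TI_graph (map_pmf sym_core X)"
proof -
  define P where "P = map_pmf (image edge_fact) X"
  have "inj edge_fact"
    by (auto simp: inj_def edge_fact_def prod_eq_iff)
  then have "indep_random_set P (\<lambda>f. if f \<in> range edge_fact then q (inv edge_fact f) else 0)"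
    unfolding P_def using assms(2) by (intro indep_random_set_map_image) auto
  then have "tuple_independent P"
    by (rule indep_random_set_imp_tuple_independent)
  moreover have "is_PDB {0} (\<lambda>_. 2) P"
    using assms(1) by (auto simp: P_def is_PDB_def is_instance_def edge_fact_def)
  moreover have "wf_cq sym_query [0, 1]"
    by (auto simp: wf_cq_def sym_query_def)
  moreover have "map_pmf (graph_view sym_query [0, 1]) P = map_pmf sym_core X"
    unfolding P_def map_pmf_comp graph_view_sym_query ..
  ultimately show ?thesis
    unfolding in_CQ_TI_graph_def by (intro exI[of _ "{0}"] exI[of _ "\<lambda>_. 2"] exI) auto
qed

lemma summable_inverse_square_half_index: "summable (\<lambda>n::nat. 1 / real (n div 2 + 1) ^ 2)"
proof (rule summable_comparison_test')
  have "summable (\<lambda>n. 1 / real n ^ 2)"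
    using inverse_power_summable[of 2] by (simp add: inverse_eq_divide)
  then show "summable (\<lambda>n. 4 * (1 / real (Suc n) ^ 2))"
    by (intro summable_mult) (subst summable_Suc_iff)
next
  fix n :: nat
  have "Suc n \<le> 2 * (n div 2 + 1)"
    by presburger
  then have "real (Suc n) \<le> 2 * real (n div 2 + 1)"
    by (metis of_nat_le_iff of_nat_mult of_nat_numeral)
  then have "real (Suc n) ^ 2 \<le> (2 * real (n div 2 + 1)) ^ 2"
    by (rule power_mono) simp
  also have "\<dots> = 4 * real (n div 2 + 1) ^ 2"
    by (subst power_mult_distrib) simp
  finally have "real (Suc n) ^ 2 \<le> 4 * real (n div 2 + 1) ^ 2" .
  then show "norm (1 / real (n div 2 + 1) ^ 2) \<le> 4 * (1 / real (Suc n) ^ 2)"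
    by (simp add: field_simps)
qed

locale edge_enumeration =
  fixes a b :: "nat \<Rightarrow> 'u"
  assumes endpoints_distinct: "\<And>i. i > 0 \<Longrightarrow> a i \<noteq> b i"
    and inj_on_edges: "inj_on (\<lambda>i. {a i, b i}) {i. i > 0}"
begin

definition arcs :: "nat \<Rightarrow> ('u \<times> 'u) set" where
  "arcs i = {(a i, b i), (b i, a i)}"

lemma arcs_unique: "i > 0 \<Longrightarrow> j > 0 \<Longrightarrow> p \<in> arcs i \<Longrightarrow> p \<in> arcs j \<Longrightarrow> i = j"
proof -
  assume "i > 0" "j > 0" "p \<in> arcs i" "p \<in> arcs j"
  moreover obtain x y where "p = (x, y)"
    by fastforce
  ultimately have "{a i, b i} = {x, y}" "{a j, b j} = {x, y}"
    by (auto simp: arcs_def)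
  then show "i = j"
    using inj_onD[OF inj_on_edges, of i j] \<open>i > 0\<close> \<open>j > 0\<close> by simp
qed

definition arc_prob :: "'u \<times> 'u \<Rightarrow> real" where
  "arc_prob p = (if \<exists>i>0. p \<in> arcs i then 1 / real (THE i. i > 0 \<and> p \<in> arcs i) ^ 2 else 0)"

lemma arc_prob_arcs: "i > 0 \<Longrightarrow> p \<in> arcs i \<Longrightarrow> arc_prob p = 1 / real i ^ 2"
proof -
  assume "i > 0" "p \<in> arcs i"
  then have "(THE i. i > 0 \<and> p \<in> arcs i) = i"
    using arcs_unique by blast
  then show ?thesis
    unfolding arc_prob_def using \<open>i > 0\<close> \<open>p \<in> arcs i\<close> by auto
qed

lemma arc_prob_eq_0: "(\<And>i. i > 0 \<Longrightarrow> p \<notin> arcs i) \<Longrightarrow> arc_prob p = 0"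
  unfolding arc_prob_def by auto

(* Arcs of the i-th edge get the indices 2i - 2 and 2i - 1. *)
definition enum_arc :: "nat \<Rightarrow> 'u \<times> 'u" where
  "enum_arc n = (let i = n div 2 + 1 in if even n then (a i, b i) else (b i, a i))"

lemma enum_arc_in_arcs: "enum_arc n \<in> arcs (n div 2 + 1)"
  by (simp add: enum_arc_def arcs_def Let_def)

lemma inj_enum_arc: "inj enum_arc"
proof (rule injI)
  fix n m assume eq: "enum_arc n = enum_arc m"
  then have "n div 2 + 1 = m div 2 + 1"
    using arcs_unique[of "n div 2 + 1" "m div 2 + 1"] enum_arc_in_arcs[of n] enum_arc_in_arcs[of m]
    by simp
  moreover have "even n \<longleftrightarrow> even m"
    using eq endpoints_distinct[of "n div 2 + 1"] \<open>n div 2 + 1 = m div 2 + 1\<close>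
    by (auto simp: enum_arc_def Let_def split: if_splits)
  ultimately show "n = m"
    by presburger
qed

lemma arcs_subset_range_enum_arc: "i > 0 \<Longrightarrow> arcs i \<subseteq> range enum_arc"
proof -
  assume "i > 0"
  then have "enum_arc (2 * (i - 1)) = (a i, b i)" "enum_arc (2 * (i - 1) + 1) = (b i, a i)"
    by (simp_all add: enum_arc_def Let_def)
  then show ?thesis
    unfolding arcs_def by (metis empty_subsetI insert_subset rangeI)
qed

lemma obtain_random_arc_set:
  obtains X where "\<And>G. G \<in> set_pmf X \<Longrightarrow> finite G" and "indep_random_set X arc_prob"
proof -
  let ?r = "\<lambda>n. 1 / real (n div 2 + 1) ^ 2"
  obtain P where fin: "\<And>S. S \<in> set_pmf P \<Longrightarrow> finite S" and P: "indep_random_set P ?r"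
    using obtain_indep_random_set[of ?r] summable_inverse_square_half_index by force
  have "indep_random_set (map_pmf (image enum_arc) P) arc_prob"
  proof (rule indep_random_set_map_image[OF P inj_enum_arc])
    show "arc_prob (enum_arc n) = ?r n" for n
      using arc_prob_arcs[OF _ enum_arc_in_arcs] by simp
    show "arc_prob p = 0" if "p \<notin> range enum_arc" for p
      using that arcs_subset_range_enum_arc by (auto intro: arc_prob_eq_0)
  qed
  moreover have "\<And>G. G \<in> set_pmf (map_pmf (image enum_arc) P) \<Longrightarrow> finite G"
    using fin by auto
  ultimately show ?thesis
    using that by blast
qed

definition edge_support :: "('u \<times> 'u) set \<Rightarrow> nat set" where
  "edge_support H = {i. i > 0 \<and> arcs i \<inter> H \<noteq> {}}"

lemma finite_edge_support:
  assumes "finite H"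
  shows "finite (edge_support H)"
proof (rule inj_on_finite[of "\<lambda>i. {a i, b i}" _ "(\<lambda>(x, y). {x, y}) ` H"])
  show "inj_on (\<lambda>i. {a i, b i}) (edge_support H)"
    by (rule inj_on_subset[OF inj_on_edges]) (auto simp: edge_support_def)
  show "(\<lambda>i. {a i, b i}) ` edge_support H \<subseteq> (\<lambda>(x, y). {x, y}) ` H"
    by (auto simp: edge_support_def arcs_def insert_commute intro: rev_image_eqI)
qed (use assms in simp)

lemma Union_arcs_edge_support:
  assumes "sym H" and "\<And>p. p \<in> H \<Longrightarrow> \<exists>i>0. p \<in> arcs i"
  shows "\<Union>(arcs ` edge_support H) = H"
  using assms by (fastforce simp: edge_support_def arcs_def sym_def)

lemma prod_arc_prob_Union_arcs:
  assumes "finite T" and "T \<subseteq> {i. i > 0}"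
  shows "(\<Prod>p\<in>\<Union>(arcs ` T). arc_prob p) = (\<Prod>i\<in>T. 1 / real i ^ 4)"
proof -
  have "(\<Prod>p\<in>\<Union>(arcs ` T). arc_prob p) = (\<Prod>i\<in>T. \<Prod>p\<in>arcs i. arc_prob p)"
  proof (rule prod.UNION_disjoint)
    show "\<forall>i\<in>T. \<forall>j\<in>T. i \<noteq> j \<longrightarrow> arcs i \<inter> arcs j = {}"
      using arcs_unique assms(2) by blast
  qed (use assms in \<open>auto simp: arcs_def\<close>)
  also have "\<dots> = (\<Prod>i\<in>T. 1 / real i ^ 2 * (1 / real i ^ 2))"
  proof (rule prod.cong)
    fix i assume "i \<in> T"
    then have "i > 0" "(a i, b i) \<noteq> (b i, a i)"
      using assms(2) endpoints_distinct by auto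
    then show "(\<Prod>p\<in>arcs i. arc_prob p) = 1 / real i ^ 2 * (1 / real i ^ 2)"
      by (simp add: arcs_def arc_prob_arcs)
  qed simp
  also have "\<dots> = (\<Prod>i\<in>T. 1 / real i ^ 4)"
    by (simp flip: power_add)
  finally show ?thesis .
qed

end

locale edge_graph = edge_enumeration a b for a b :: "nat \<Rightarrow> 'u::countable" +
  fixes Q :: "('u \<times> 'u) set pmf"
  assumes edge_indep: "edge_indep_unbounded_graph Q"
    and prob_arc: "\<And>i. i > 0 \<Longrightarrow> measure_pmf.prob Q {G. (a i, b i) \<in> G} = 1 / real i ^ 4"
    and prob_non_arc: "\<And>x y. (\<forall>i>0. {x, y} \<noteq> {a i, b i}) \<Longrightarrow> measure_pmf.prob Q {G. (x, y) \<in> G} = 0"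
begin

lemma AE_sym: "AE G in Q. sym G"
  using edge_indep by (auto simp: edge_indep_unbounded_graph_def sym_def AE_measure_pmf_iff)

lemma prob_superset_edge_indep:
  assumes "finite F" and "\<forall>(x, y)\<in>F. x \<noteq> y" and "inj_on (\<lambda>(x, y). {x, y}) F"
  shows "measure_pmf.prob Q {G. F \<subseteq> G} = (\<Prod>e\<in>F. measure_pmf.prob Q {G. e \<in> G})"
  using edge_indep assms unfolding edge_indep_unbounded_graph_def by blast

lemma prob_superset_sym:
  assumes "finite H" and "sym H"
  shows "measure_pmf.prob Q {G. H \<subseteq> G} = (\<Prod>p\<in>H. arc_prob p)"
proof (cases "\<forall>p\<in>H. \<exists>i>0. p \<in> arcs i")
  case True
  define T where "T = edge_support H"
  have T: "finite T" "T \<subseteq> {i. i > 0}"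
    using finite_edge_support[OF \<open>finite H\<close>] by (auto simp: T_def edge_support_def)
  have H: "H = \<Union>(arcs ` T)"
    using Union_arcs_edge_support[OF \<open>sym H\<close>] True by (simp add: T_def)
  define Fwd where "Fwd = (\<lambda>i. (a i, b i)) ` T"
  have inj_fwd: "inj_on (\<lambda>i. (a i, b i)) T"
    using inj_on_subset[OF inj_on_edges T(2)] by (auto simp: inj_on_def)
  have "measure_pmf.prob Q {G. H \<subseteq> G} = measure_pmf.prob Q {G. Fwd \<subseteq> G}"
    by (rule measure_eq_AE) (use AE_sym in \<open>auto simp: H Fwd_def arcs_def sym_def elim!: AE_mp\<close>)
  also have "\<dots> = (\<Prod>e\<in>Fwd. measure_pmf.prob Q {G. e \<in> G})"
  proof (rule prob_superset_edge_indep)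
    show "finite Fwd"
      using T by (simp add: Fwd_def)
    show "\<forall>(x, y)\<in>Fwd. x \<noteq> y"
      using T endpoints_distinct by (auto simp: Fwd_def)
    show "inj_on (\<lambda>(x, y). {x, y}) Fwd"
      using inj_onD[OF inj_on_edges] T(2) by (auto simp: Fwd_def intro!: inj_onI)
  qed
  also have "\<dots> = (\<Prod>i\<in>T. 1 / real i ^ 4)"
    using T(2) by (simp add: Fwd_def prod.reindex[OF inj_fwd] prob_arc subset_eq)
  also have "\<dots> = (\<Prod>p\<in>H. arc_prob p)"
    using prod_arc_prob_Union_arcs[OF T] by (simp add: H)
  finally show ?thesis .
next
  case False
  then obtain x y where xy: "(x, y) \<in> H" "\<forall>i>0. (x, y) \<notin> arcs i"
    by fast
  then have "(\<Prod>p\<in>H. arc_prob p) = 0"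
    using \<open>finite H\<close> arc_prob_eq_0 by (auto simp: prod_zero_iff)
  moreover have "measure_pmf.prob Q {G. H \<subseteq> G} \<le> measure_pmf.prob Q {G. (x, y) \<in> G}"
    using xy by (intro measure_pmf.finite_measure_mono) auto
  moreover have "measure_pmf.prob Q {G. (x, y) \<in> G} = 0"
    using xy by (intro prob_non_arc) (auto simp: arcs_def doubleton_eq_iff)
  ultimately show ?thesis
    by (simp add: measure_le_0_iff)
qed

lemma eq_map_sym_core:
  assumes "indep_random_set X arc_prob"
  shows "Q = map_pmf sym_core X"
proof (rule random_set_pmf_eqI)
  fix F :: "('u \<times> 'u) set" assume "finite F"
  have "measure_pmf.prob Q {G. F \<subseteq> G} = measure_pmf.prob Q {G. F \<union> F\<inverse> \<subseteq> G}"
    by (rule measure_eq_AE) (use AE_sym in \<open>auto simp: sym_def elim!: AE_mp\<close>)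
  also have "\<dots> = (\<Prod>p\<in>F \<union> F\<inverse>. arc_prob p)"
    using \<open>finite F\<close> by (intro prob_superset_sym) (auto simp: sym_def)
  also have "\<dots> = measure_pmf.prob X {G. F \<union> F\<inverse> \<subseteq> G}"
    by (rule assms[unfolded indep_random_set_def, rule_format, symmetric]) (use \<open>finite F\<close> in simp)
  also have "\<dots> = measure_pmf.prob (map_pmf sym_core X) {G. F \<subseteq> G}"
    by (simp add: subset_sym_core_iff)
  finally show "measure_pmf.prob Q {G. F \<subseteq> G} = measure_pmf.prob (map_pmf sym_core X) {G. F \<subseteq> G}" .
qed

end

theorem lemma7p12:
  fixes a b :: "nat \<Rightarrow> 'u :: {countable, infinite, linorder}"
    and D1 :: "('u \<times> 'u) set pmf"
  assumes two: "\<And>i. i > 0 \<Longrightarrow> a i \<noteq> b i"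
    and distinct_pairs: "inj_on (\<lambda>i. {a i, b i}) {i. i > 0}"
    and eiu: "edge_indep_unbounded_graph D1"
    and marg_ab: "\<And>i. i > 0 \<Longrightarrow> measure_pmf.prob D1 {D. (a i, b i) \<in> D} = 1 / real i ^ 4"
    and marg_ba: "\<And>i. i > 0 \<Longrightarrow> measure_pmf.prob D1 {D. (b i, a i) \<in> D} = 1 / real i ^ 4"
    and marg_other: "\<And>x y. (\<forall>i>0. {x, y} \<noteq> {a i, b i}) \<Longrightarrow> measure_pmf.prob D1 {D. (x, y) \<in> D} = 0"
  shows "in_CQ_TI_graph D1"
proof -
  interpret edge_graph a b D1
    using two distinct_pairs eiu marg_ab marg_other by unfold_locales
  obtain X where "\<And>G. G \<in> set_pmf X \<Longrightarrow> finite G" and X: "indep_random_set X arc_prob"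
    using obtain_random_arc_set by blast
  then have "in_CQ_TI_graph (map_pmf sym_core X)"
    by (rule in_CQ_TI_graph_sym_core)
  then show ?thesis
    by (simp flip: eq_map_sym_core[OF X])
qed

end
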